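(* Let $Q=ax^2+bxy+cy^2\in\mathcal{Q}_N(d_K)$ and let $P$ be a subgroup of $I_K(\mathfrak{n})$ with $P_{K,1}(\mathfrak{n})\subseteq P\subseteq P_K(\mathfrak{n})$. Then every class $C\in P_K(\mathfrak{n})/P$ can be written as $C=[(u\omega_Q+v)\mathcal{O}_K]$ for some integers $u,v$, not both zero, such that $\gcd(N,\,Q(v,-u))=1$.
   Context: Let $K$ be an imaginary quadratic field with discriminant $d_K$ and ring of integers $\mathcal{O}_K$. Let $N$ be a positive integer and $\mathfrak{n}=N\mathcal{O}_K$. $I_K(\mathfrak{n})$ denotes the group of fractional ideals of $K$ relatively prime to $\mathfrak{n}$, $P_K(\mathfrak{n})$ its subgroup of principal fractional ideals, and $P_{K,1}(\mathfrak{n})=\{\nu\mathcal{O}_K:\nu\in K^*,\ \nu\equiv^*1\pmod{\mathfrak{n}}\}$, where $\equiv^*$ is multiplicative congruence. $\mathcal{Q}(d_K)$ is the set of primitive positive definite binary quadratic forms $ax^2+bxy+cy^2\in\mathbb{Z}[x,y]$ with $b^2-4ac=d_K$, and $\mathcal{Q}_N(d_K)=\{ax^2+bxy+cy^2\in\mathcal{Q}(d_K):\gcd(N,a)=1\}$. For $Q=ax^2+bxy+cy^2\in\mathcal{Q}(d_K)$, $\omega_Q=(-b+\sqrt{d_K})/(2a)$, the root of $Q(x,1)$ in the upper half-plane $\mathbb{H}$. *)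

theory Defs
  imports "HOL-Computational_Algebra.Computational_Algebra" "HOL-Number_Theory.Number_Theory"
begin

text \<open>Imaginary quadratic field K = Q(sqrt d) of (fundamental) discriminant d < 0,
  realised inside the complex numbers, with sqrt d = i * sqrt(-d).\<close>

definition fund_disc :: "int \<Rightarrow> bool" where
  "fund_disc d \<longleftrightarrow>
     (d mod 4 = 1 \<and> squarefree d) \<or>
     (\<exists>m. d = 4 * m \<and> (m mod 4 = 2 \<or> m mod 4 = 3) \<and> squarefree m)"

definition sqrtd :: "int \<Rightarrow> complex" where
  "sqrtd d = \<i> * complex_of_real (sqrt (- real_of_int d))"

definition Kf :: "int \<Rightarrow> complex set" where
  "Kf d = {of_rat p + of_rat q * sqrtd d | p q. True}"

definition OK :: "int \<Rightarrow> complex set" where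
  "OK d = {x \<in> Kf d. algebraic_int x}"

definition frac_ideal :: "int \<Rightarrow> complex set \<Rightarrow> bool" where
  "frac_ideal d I \<longleftrightarrow> I \<subseteq> Kf d \<and> 0 \<in> I \<and> I \<noteq> {0} \<and>
     (\<forall>x\<in>I. \<forall>y\<in>I. x + y \<in> I) \<and> (\<forall>r\<in>OK d. \<forall>x\<in>I. r * x \<in> I) \<and>
     (\<exists>c\<in>OK d. c \<noteq> 0 \<and> (\<forall>x\<in>I. c * x \<in> OK d))"

definition fid_prod :: "complex set \<Rightarrow> complex set \<Rightarrow> complex set" where
  "fid_prod I J = {\<Sum>i<(n::nat). x i * y i | n x y. \<forall>i<n. x i \<in> I \<and> y i \<in> J}"

definition fid_sum :: "complex set \<Rightarrow> complex set \<Rightarrow> complex set" where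
  "fid_sum I J = {x + y | x y. x \<in> I \<and> y \<in> J}"

definition frac_inv :: "int \<Rightarrow> complex set \<Rightarrow> complex set" where
  "frac_inv d I = {x \<in> Kf d. \<forall>y\<in>I. x * y \<in> OK d}"

definition prin :: "int \<Rightarrow> complex \<Rightarrow> complex set" where
  "prin d x = {x * y | y. y \<in> OK d}"

text \<open>Integral ideal coprime to n = N O_K.\<close>
definition int_coprime :: "int \<Rightarrow> int \<Rightarrow> complex set \<Rightarrow> bool" where
  "int_coprime d N A \<longleftrightarrow> frac_ideal d A \<and> A \<subseteq> OK d \<and>
     fid_sum A (prin d (of_int N)) = OK d"

text \<open>I_K(n): fractional ideals relatively prime to n, i.e. of the form A B^{-1}
  with A, B integral ideals coprime to n (equivalently I B = A).\<close>
definition IK :: "int \<Rightarrow> int \<Rightarrow> complex set set" where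
  "IK d N = {I. frac_ideal d I \<and>
     (\<exists>A B. int_coprime d N A \<and> int_coprime d N B \<and> fid_prod I B = A)}"

definition PK :: "int \<Rightarrow> int \<Rightarrow> complex set set" where
  "PK d N = {prin d x | x. x \<in> Kf d \<and> x \<noteq> 0 \<and> prin d x \<in> IK d N}"

text \<open>Multiplicative congruence nu == 1 mod* n: nu = alpha / beta with alpha, beta in O_K
  coprime to n and alpha == beta mod n.\<close>
definition mult_cong1 :: "int \<Rightarrow> int \<Rightarrow> complex \<Rightarrow> bool" where
  "mult_cong1 d N \<nu> \<longleftrightarrow> (\<exists>\<alpha> \<beta>. \<alpha> \<in> OK d \<and> \<beta> \<in> OK d \<and> \<alpha> \<noteq> 0 \<and> \<beta> \<noteq> 0 \<and>
      int_coprime d N (prin d \<alpha>) \<and> int_coprime d N (prin d \<beta>) \<and>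
      \<alpha> - \<beta> \<in> prin d (of_int N) \<and> \<nu> = \<alpha> / \<beta>)"

definition PK1 :: "int \<Rightarrow> int \<Rightarrow> complex set set" where
  "PK1 d N = {prin d \<nu> | \<nu>. \<nu> \<in> Kf d \<and> \<nu> \<noteq> 0 \<and> mult_cong1 d N \<nu>}"

definition subgroup_IK :: "int \<Rightarrow> int \<Rightarrow> complex set set \<Rightarrow> bool" where
  "subgroup_IK d N P \<longleftrightarrow> P \<subseteq> IK d N \<and> OK d \<in> P \<and>
     (\<forall>I\<in>P. \<forall>J\<in>P. fid_prod I J \<in> P) \<and> (\<forall>I\<in>P. frac_inv d I \<in> P)"

definition QN :: "int \<Rightarrow> int \<Rightarrow> int \<Rightarrow> int \<Rightarrow> int \<Rightarrow> bool" where
  "QN d N a b c \<longleftrightarrow> b^2 - 4*a*c = d \<and> a > 0 \<and> gcd a (gcd b c) = 1 \<and> gcd N a = 1"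

definition qf :: "int \<Rightarrow> int \<Rightarrow> int \<Rightarrow> int \<Rightarrow> int \<Rightarrow> int" where
  "qf a b c x y = a*x^2 + b*x*y + c*y^2"

definition omegaQ :: "int \<Rightarrow> int \<Rightarrow> int \<Rightarrow> complex" where
  "omegaQ d a b = (- of_int b + sqrtd d) / (2 * of_int a)"

end

theory Submission
  imports Defs
begin

text \<open>Write \<open>C = (x)\<close> with \<open>(x) B = A\<close> for integral ideals \<open>A\<close>, \<open>B\<close> prime to \<open>N\<close>, and pick
  \<open>\<beta> \<in> B\<close> and \<open>a\<^sub>0 = x b\<^sub>0 \<in> A\<close>, both \<open>\<equiv> 1 (mod N)\<close>. Then \<open>\<alpha> = x \<beta> \<in> \<O>\<^sub>K\<close> satisfies
  \<open>\<alpha> b\<^sub>0 = \<beta> a\<^sub>0 \<equiv> 1 (mod N)\<close>, so \<open>\<alpha>/x = \<alpha> b\<^sub>0 / a\<^sub>0\<close> generates an ideal in \<open>P\<^sub>K\<^sub>,\<^sub>1(N \<O>\<^sub>K)\<close> and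
  \<open>(\<alpha>) = C (\<alpha>/x)\<close> lies in the class of \<open>C\<close>. Since \<open>\<O>\<^sub>K = \<int> + \<int> \<omega>\<^sub>K\<close> and
  \<open>a \<omega>\<^sub>Q \<equiv> \<omega>\<^sub>K (mod \<int>)\<close>, we get \<open>\<alpha> = u \<omega>\<^sub>Q + v\<close>, and \<open>Q(v, -u) = a N(\<alpha>)\<close> is prime to \<open>N\<close>:
  \<open>a\<close> is by hypothesis, and \<open>N(\<alpha>) N(b\<^sub>0) \<equiv> 1 (mod N)\<close>.\<close>

lemma sqrtd_mult_self: "d < 0 \<Longrightarrow> sqrtd d * sqrtd d = of_int d"
  by (simp add: sqrtd_def complex_eq_iff)

lemma Re_sqrtd [simp]: "Re (sqrtd d) = 0"
  and Im_sqrtd [simp]: "Im (sqrtd d) = sqrt (- real_of_int d)"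
  and cnj_sqrtd [simp]: "cnj (sqrtd d) = - sqrtd d"
  by (simp_all add: sqrtd_def complex_eq_iff)

lemma Kf_divide:
  assumes d: "d < 0" and x: "x \<in> Kf d" and y: "y \<in> Kf d"
  shows "x / y \<in> Kf d"
proof -
  obtain p1 q1 where x: "x = of_rat p1 + of_rat q1 * sqrtd d" using x unfolding Kf_def by blast
  obtain p2 q2 where y: "y = of_rat p2 + of_rat q2 * sqrtd d" using y unfolding Kf_def by blast
  define D where "D = p2 * p2 - q2 * q2 * of_int d"
  have D_pos: "D > 0" if "y \<noteq> 0"
  proof -
    have "p2 \<noteq> 0 \<or> q2 \<noteq> 0" using that y by auto
    then have "0 < p2 * p2 \<or> 0 < q2 * q2 * of_int (- d)"
      using d by (auto simp: zero_less_mult_iff mult_less_0_iff)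
    moreover have "0 \<le> q2 * q2 * of_int (- d)"
      by (rule mult_nonneg_nonneg) (use d in auto)
    moreover have "0 \<le> p2 * p2" by simp
    ultimately show ?thesis unfolding D_def by linarith
  qed
  have y_cnj: "y * (of_rat p2 - of_rat q2 * sqrtd d) = of_rat D"
    unfolding y D_def using sqrtd_mult_self[OF d] by (simp add: of_rat_mult of_rat_diff algebra_simps)
  show ?thesis
  proof (cases "y = 0")
    case True
    have "x / y = of_rat 0 + of_rat 0 * sqrtd d" using True by simp
    then show ?thesis unfolding Kf_def by blast
  next
    case False
    have "x / y = x * (of_rat p2 - of_rat q2 * sqrtd d) / of_rat D"
      using y_cnj D_pos[OF False] False by (simp add: field_simps)
    also have "\<dots> = of_rat ((p1 * p2 - q1 * q2 * of_int d) / D) + of_rat ((q1 * p2 - p1 * q2) / D) * sqrtd d"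
      unfolding x using sqrtd_mult_self[OF d] D_pos[OF False]
      by (simp add: of_rat_mult of_rat_diff of_rat_divide field_simps)
    finally show ?thesis unfolding Kf_def by blast
  qed
qed

lemma map_poly_of_int_add:
  "map_poly (of_int :: int \<Rightarrow> 'a::comm_ring_1) (p + q) = map_poly of_int p + map_poly of_int q"
  by (rule poly_eqI) (simp add: coeff_map_poly)

lemma map_poly_of_int_mult:
  "map_poly (of_int :: int \<Rightarrow> 'a::comm_ring_1) (p * q) = map_poly of_int p * map_poly of_int q"
proof (induction p)
  case (pCons a p)
  then show ?case
    by (simp add: map_poly_of_int_add map_poly_smult map_poly_pCons algebra_simps)
qed simp

lemma int_poly_linear_nonreal_root:
  fixes r :: "int poly" and z :: complex
  assumes "degree r \<le> 1" and "poly (map_poly of_int r) z = 0" and "Im z \<noteq> 0"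
  shows "r = 0"
proof -
  have r: "r = [:Polynomial.coeff r 0, Polynomial.coeff r 1:]"
    using assms(1) by (intro poly_eqI) (auto simp: coeff_pCons coeff_eq_0 split: nat.split)
  have root: "of_int (Polynomial.coeff r 0) + z * of_int (Polynomial.coeff r 1) = 0"
    using assms(2) by (subst (asm) r) (simp add: map_poly_pCons)
  have "Im (of_int (Polynomial.coeff r 0) + z * of_int (Polynomial.coeff r 1))
      = Im z * of_int (Polynomial.coeff r 1)" by simp
  then have "Im z * of_int (Polynomial.coeff r 1) = 0" by (simp only: root) simp
  then have "Polynomial.coeff r 1 = 0" using assms(3) by simp
  with root r show ?thesis by simp
qed

lemma content_factor_of_monic:
  fixes f m g :: "int poly"
  assumes f: "lead_coeff f = 1" and fac: "m * g = Polynomial.smult E f" and E: "E \<noteq> 0"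
  shows "content m = \<bar>lead_coeff m\<bar>"
proof -
  have "content f = 1"
    using content_dvd_coeff[of f "degree f"] f normalize_content[of f] by (metis is_unit_normalize)
  then have contents: "content m * content g = \<bar>E\<bar>"
    using arg_cong[OF fac, of content] by (simp add: content_mult)
  have "lead_coeff m * lead_coeff g = E"
    using arg_cong[OF fac, of lead_coeff] f E by (simp add: lead_coeff_mult)
  then have leads: "\<bar>lead_coeff m\<bar> * \<bar>lead_coeff g\<bar> = \<bar>E\<bar>"
    by (metis abs_mult)
  then have "lead_coeff m \<noteq> 0" "lead_coeff g \<noteq> 0" using E by auto
  then have "\<bar>content m\<bar> \<le> \<bar>lead_coeff m\<bar>" "\<bar>content g\<bar> \<le> \<bar>lead_coeff g\<bar>"
    by (simp_all add: dvd_imp_le_int content_dvd_coeff)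
  then have "content m \<le> \<bar>lead_coeff m\<bar>" "content g \<le> \<bar>lead_coeff g\<bar>"
    by simp_all
  moreover have "0 \<le> content m" "0 \<le> content g"
    using normalize_content[of m] normalize_content[of g] by (metis abs_ge_zero normalize_int_def)+
  ultimately have "content m * content g \<le> content m * \<bar>lead_coeff g\<bar>"
    and "content m * \<bar>lead_coeff g\<bar> \<le> \<bar>lead_coeff m\<bar> * \<bar>lead_coeff g\<bar>"
    by (simp_all add: mult_left_mono mult_right_mono)
  with contents leads \<open>lead_coeff g \<noteq> 0\<close> \<open>content m \<le> \<bar>lead_coeff m\<bar>\<close> show ?thesis
    by (metis antisym abs_ge_zero mult_right_cancel abs_0_eq)
qed

lemma algebraic_int_Kf_trace_norm:
  assumes d: "d < 0" and z: "z = of_rat p + of_rat q * sqrtd d" and "algebraic_int z"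
  shows "2 * p \<in> \<int> \<and> p * p - q * q * of_int d \<in> \<int>"
proof (cases "q = 0")
  case True
  then have "z \<in> \<int>" using z \<open>algebraic_int z\<close> by (simp add: rational_algebraic_int_is_int)
  then obtain k where "of_rat p = (of_int k :: complex)" using z True by (auto elim: Ints_cases)
  then have "p = of_int k" by (metis of_rat_eq_iff of_rat_of_int_eq)
  then show ?thesis using True by simp
next
  case False
  obtain f :: "int poly" where f: "poly (map_poly of_int f) z = 0" "lead_coeff f = 1"
    using \<open>algebraic_int z\<close> algebraic_int_altdef_ipoly by blast
  obtain P Q b :: int where b: "b > 0" and pq: "p = of_int P / of_int b" "q = of_int Q / of_int b"
  proof -
    obtain P1 b1 P2 b2 where "quotient_of p = (P1, b1)" "quotient_of q = (P2, b2)"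
      by (meson surj_pair)
    then have "b1 > 0" "b2 > 0" "p = of_int P1 / of_int b1" "q = of_int P2 / of_int b2"
      by (simp_all add: quotient_of_denom_pos quotient_of_div)
    then show ?thesis
      by (intro that[of "b1 * b2" "P1 * b2" "P2 * b1"]) simp_all
  qed
  \<comment> \<open>the minimal polynomial of \<open>z\<close>, scaled by \<open>b\<^sup>2\<close> to have integer coefficients\<close>
  define e t n where "e = b * b" and "t = 2 * P * b" and "n = P * P - Q * Q * d"
  define m where "m = [:n, - t, e:]"
  have e: "e > 0" using b by (simp add: e_def)
  have m: "m \<noteq> 0" "degree m = 2" "lead_coeff m = e"
    using e by (simp_all add: m_def numeral_2_eq_2)
  have m_root: "poly (map_poly of_int m) z = 0"
    using b sqrtd_mult_self[OF d]
    by (simp add: m_def map_poly_pCons e_def t_def n_def z pq of_rat_divide field_simps)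
  obtain g r where "pseudo_divmod f m = (g, r)" by (meson surj_pair)
  from pseudo_divmod[OF m(1) this] m
  have division: "Polynomial.smult (e ^ (Suc (degree f) - 2)) f = m * g + r"
    and "r = 0 \<or> degree r < 2" by simp_all
  have "poly (map_poly of_int r) z = 0"
    using arg_cong[OF division, of "\<lambda>s. poly (map_poly of_int s) z"] f m_root
    by (simp add: map_poly_of_int_add map_poly_of_int_mult map_poly_smult)
  moreover have "Im z \<noteq> 0"
    using False b d by (simp add: z pq of_rat_divide)
  ultimately have "r = 0"
    using int_poly_linear_nonreal_root \<open>r = 0 \<or> degree r < 2\<close> by fastforce
  then have "content m = e"
    using content_factor_of_monic[OF f(2), of m g "e ^ (Suc (degree f) - 2)"] division e m
    by simp
  then have "e dvd t" "e dvd n"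
    using content_dvd_coeff[of m 0] content_dvd_coeff[of m 1] by (simp_all add: m_def)
  then obtain k l where "t = e * k" "n = e * l" by (elim dvdE)
  then have "2 * p = of_int k" "p * p - q * q * of_int d = of_int l"
    using b by (simp_all add: pq e_def t_def n_def field_simps flip: of_int_mult of_int_diff)
  then show ?thesis by simp
qed

lemma Ints_if_square_mult_squarefree:
  fixes r :: rat and k :: int
  assumes "squarefree k" and "r * r * of_int k \<in> \<int>"
  shows "r \<in> \<int>"
proof -
  obtain a b where ab: "quotient_of r = (a, b)" by (meson surj_pair)
  have b: "b > 0" and "coprime a b" and r: "r = of_int a / of_int b"
    using ab by (simp_all add: quotient_of_denom_pos quotient_of_coprime quotient_of_div)
  obtain D where "r * r * of_int k = of_int D" using assms(2) by (auto elim: Ints_cases)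
  then have "of_int (a * a * k) = (of_int (D * b * b) :: rat)"
    using b unfolding r by (simp add: field_simps)
  then have "b\<^sup>2 dvd a\<^sup>2 * k"
    unfolding of_int_eq_iff by (simp add: power2_eq_square mult.assoc)
  moreover have "coprime (b\<^sup>2) (a\<^sup>2)" using \<open>coprime a b\<close> by (simp add: coprime_commute)
  ultimately have "b\<^sup>2 dvd k" using coprime_dvd_mult_right_iff by blast
  then have "b = 1" using assms(1) b unfolding squarefree_def by fastforce
  then show ?thesis using r by simp
qed

text \<open>Here \<open>T\<close> and \<open>M\<close> are the trace and norm of \<open>T/2 + q \<surd>d\<close>. For \<open>d = 4m\<close> squarefreeness
  only gives \<open>4q \<in> \<int>\<close>; \<open>4q\<close> is even since otherwise \<open>m \<equiv> T\<^sup>2 \<equiv> 0, 1 (mod 4)\<close>.\<close>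
lemma fund_disc_half_integral:
  fixes q :: rat
  assumes fd: "fund_disc d" and norm: "(2 * q) * (2 * q) * of_int d = of_int (T * T - 4 * M)"
  shows "\<exists>R. 2 * q = of_int R \<and> even (T - R * d)"
proof (cases "d mod 4 = 1 \<and> squarefree d")
  case True
  then obtain R where R: "2 * q = of_int R"
    using Ints_if_square_mult_squarefree[of d "2 * q"] norm by (auto elim: Ints_cases)
  then have "R * R * d = T * T - 4 * M"
    using norm by (metis of_int_eq_iff of_int_mult)
  moreover have "odd d" using conjunct1[OF True] by presburger
  ultimately have "even (T * T - R * R * d)" and "odd d" by simp_all
  then have "even (T - R * d)" by (auto simp: even_mult_iff)
  with R show ?thesis by blast
next
  case False
  then obtain m where m: "d = 4 * m" "m mod 4 = 2 \<or> m mod 4 = 3" "squarefree m"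
    using fd unfolding fund_disc_def by blast
  have norm': "(4 * q) * (4 * q) * of_int m = of_int (T * T - 4 * M)"
    using norm by (simp add: m algebra_simps)
  then obtain R' where R': "4 * q = of_int R'"
    using Ints_if_square_mult_squarefree[of m "4 * q"] m(3) by (auto elim: Ints_cases)
  then have "R' * R' * m = T * T - 4 * M"
    using norm' by (metis of_int_eq_iff of_int_mult)
  then have T_sq: "T * T = 4 * M + R' * R' * m" by simp
  have "even R'"
  proof (rule ccontr)
    assume "odd R'"
    then obtain j where j: "R' = 2 * j + 1" by (elim oddE)
    show False
    proof (cases "even T")
      case True
      then obtain i where "T = 2 * i" by (elim evenE)
      then have "m = 4 * (i * i - M - (j * j + j) * m)" using T_sq j by (simp add: algebra_simps)
      then show False using m(2) by presburger
    next
      case False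
      then obtain i where "T = 2 * i + 1" by (elim oddE)
      then have "m = 4 * (i * i + i - M - (j * j + j) * m) + 1" using T_sq j by (simp add: algebra_simps)
      then show False using m(2) by presburger
    qed
  qed
  then obtain R where R: "R' = 2 * R" by (elim evenE)
  then have "even (T * T)" using T_sq by simp
  then have "even T" by simp
  then have "even (T - R * d)" using m(1) by simp
  with R R' show ?thesis by auto
qed

definition omegaK :: "int \<Rightarrow> complex" where
  "omegaK d = (of_int d + sqrtd d) / 2"

lemma Kf_omegaK_comb: "of_int s + of_int t * omegaK d \<in> Kf d"
proof -
  have "of_int s + of_int t * omegaK d
      = of_rat (of_int s + of_int t * of_int d / 2) + of_rat (of_int t / 2) * sqrtd d"
    by (simp add: omegaK_def of_rat_add of_rat_mult of_rat_divide field_simps)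
  then show ?thesis unfolding Kf_def by blast
qed

lemma OK_omegaK_basis:
  assumes d: "d < 0" and fd: "fund_disc d" and z: "z \<in> OK d"
  shows "\<exists>s t. z = of_int s + of_int t * omegaK d"
proof -
  obtain p q where pq: "z = of_rat p + of_rat q * sqrtd d" using z unfolding OK_def Kf_def by blast
  then have "2 * p \<in> \<int> \<and> p * p - q * q * of_int d \<in> \<int>"
    using algebraic_int_Kf_trace_norm[OF d] z unfolding OK_def by blast
  then obtain T M where T: "2 * p = of_int T" and M: "p * p - q * q * of_int d = of_int M"
    by (auto elim!: Ints_cases)
  have "(2 * q) * (2 * q) * of_int d = (2 * p) * (2 * p) - 4 * (p * p - q * q * of_int d)"
    by (simp add: algebra_simps)
  then have "(2 * q) * (2 * q) * of_int d = of_int (T * T - 4 * M)" by (simp add: T M)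
  then obtain R where R: "2 * q = of_int R" and "even (T - R * d)"
    using fund_disc_half_integral[OF fd] by blast
  then obtain s where s: "T - R * d = 2 * s" by (elim evenE)
  have "of_rat p = (of_int T / 2 :: complex)" "of_rat q = (of_int R / 2 :: complex)"
    using arg_cong[OF T, of "\<lambda>x. (of_rat x :: complex) / 2"]
      arg_cong[OF R, of "\<lambda>x. (of_rat x :: complex) / 2"] by (simp_all add: of_rat_mult)
  moreover have "(of_int T :: complex) = 2 * of_int s + of_int R * of_int d"
    using arg_cong[OF s, of "of_int :: int \<Rightarrow> complex"] by (simp add: algebra_simps)
  ultimately have "z = of_int s + of_int R * omegaK d"
    by (simp add: pq omegaK_def field_simps)
  then show ?thesis by blast
qed

lemma qf_eq_norm_omegaQ:
  fixes a b c u v :: int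
  assumes "d < 0" and "b\<^sup>2 - 4 * a * c = d" and "a \<noteq> 0"
  defines "\<gamma> \<equiv> of_int u * omegaQ d a b + of_int v"
  shows "of_int (qf a b c v (- u)) = of_int a * (\<gamma> * cnj \<gamma>)"
proof -
  let ?\<omega> = "omegaQ d a b"
  have "sqrtd d * sqrtd d = of_int b * of_int b - 4 * of_int a * of_int c"
    using sqrtd_mult_self[OF assms(1)] arg_cong[OF assms(2), of "of_int :: int \<Rightarrow> complex"]
    by (simp add: power2_eq_square)
  then have "(- of_int b + sqrtd d) * (- of_int b - sqrtd d) = 4 * of_int a * (of_int c :: complex)"
    by (simp add: algebra_simps)
  then have prod: "?\<omega> * cnj ?\<omega> = of_int c / of_int a"
    using assms(3) by (simp add: omegaQ_def complex_cnj_divide field_simps)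
  have sum: "?\<omega> + cnj ?\<omega> = - of_int b / of_int a"
    using assms(3) by (simp add: omegaQ_def complex_cnj_divide field_simps)
  have "\<gamma> * cnj \<gamma> = of_int v * of_int v + of_int u * of_int v * (?\<omega> + cnj ?\<omega>)
      + of_int u * of_int u * (?\<omega> * cnj ?\<omega>)"
    by (simp add: \<gamma>_def algebra_simps)
  then show ?thesis
    using assms(3) by (simp add: prod sum qf_def power2_eq_square field_simps)
qed

definition omegaK_norm :: "int \<Rightarrow> int" where
  "omegaK_norm d = (d * d - d) div 4"

locale imag_quadratic_field =
  fixes d :: int
  assumes d_neg: "d < 0" and fund_disc: "fund_disc d"
begin

lemma of_int_omegaK_norm: "(of_int (omegaK_norm d) :: complex) = (of_int d * of_int d - of_int d) / 4"
proof -
  have "4 dvd d * (d - 1)"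
  proof (cases "d mod 4 = 1")
    case True
    then have "4 dvd d - 1" by presburger
    then show ?thesis by simp
  next
    case False
    then obtain m where "d = 4 * m" using fund_disc unfolding fund_disc_def by blast
    then show ?thesis by simp
  qed
  then have "of_int (4 * omegaK_norm d) = (of_int (d * d - d) :: complex)"
    unfolding omegaK_norm_def by (simp add: algebra_simps)
  then show ?thesis by (simp add: eq_divide_eq mult.commute)
qed

lemma omegaK_mult_self: "omegaK d * omegaK d = of_int d * omegaK d - of_int (omegaK_norm d)"
  unfolding of_int_omegaK_norm omegaK_def using sqrtd_mult_self[OF d_neg] by (simp add: field_simps)

lemma cnj_omegaK: "cnj (omegaK d) = of_int d - omegaK d"
  unfolding omegaK_def by (simp add: complex_eq_iff)

lemma algebraic_int_omegaK_comb: "algebraic_int (of_int s + of_int t * omegaK d :: complex)"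
proof -
  define z where "z = (of_int s + of_int t * omegaK d :: complex)"
  define p where "p = [:of_int (s * s + s * t * d + t * t * omegaK_norm d), - of_int (2 * s + t * d), 1 :: complex:]"
  have "poly p z = 0"
    by (simp add: p_def z_def algebra_simps) (simp add: omegaK_mult_self algebra_simps)
  moreover have "\<forall>i. Polynomial.coeff p i \<in> \<int>"
    by (auto simp: p_def coeff_pCons split: nat.split)
  ultimately show ?thesis unfolding z_def by (intro algebraic_int.intros[of p]) (simp_all add: p_def)
qed

lemma OK_iff: "z \<in> OK d \<longleftrightarrow> (\<exists>s t. z = of_int s + of_int t * omegaK d)"
  using OK_omegaK_basis[OF d_neg fund_disc] Kf_omegaK_comb algebraic_int_omegaK_comb
  unfolding OK_def by blast

lemma OK_of_int [simp]: "of_int k \<in> OK d"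
  unfolding OK_iff by (rule exI[of _ k], rule exI[of _ 0]) simp

lemma OK_0 [simp]: "0 \<in> OK d" and OK_1 [simp]: "1 \<in> OK d"
  using OK_of_int[of 0] OK_of_int[of 1] by simp_all

lemma OK_add: "x \<in> OK d \<Longrightarrow> y \<in> OK d \<Longrightarrow> x + y \<in> OK d"
  unfolding OK_iff
proof (elim exE)
  fix s1 t1 s2 t2 assume "x = of_int s1 + of_int t1 * omegaK d" "y = of_int s2 + of_int t2 * omegaK d"
  then have "x + y = of_int (s1 + s2) + of_int (t1 + t2) * omegaK d" by (simp add: algebra_simps)
  then show "\<exists>s t. x + y = of_int s + of_int t * omegaK d" by blast
qed

lemma OK_uminus: "x \<in> OK d \<Longrightarrow> - x \<in> OK d"
  unfolding OK_iff
proof (elim exE)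
  fix s t assume "x = of_int s + of_int t * omegaK d"
  then have "- x = of_int (- s) + of_int (- t) * omegaK d" by simp
  then show "\<exists>s t. - x = of_int s + of_int t * omegaK d" by blast
qed

lemma OK_diff: "x \<in> OK d \<Longrightarrow> y \<in> OK d \<Longrightarrow> x - y \<in> OK d"
  using OK_add[of x "- y"] OK_uminus[of y] by simp

lemma OK_mult: "x \<in> OK d \<Longrightarrow> y \<in> OK d \<Longrightarrow> x * y \<in> OK d"
  unfolding OK_iff
proof (elim exE)
  fix s1 t1 s2 t2 assume xy: "x = of_int s1 + of_int t1 * omegaK d" "y = of_int s2 + of_int t2 * omegaK d"
  have "x * y = of_int s1 * of_int s2 + (of_int s1 * of_int t2 + of_int t1 * of_int s2) * omegaK d
      + of_int t1 * of_int t2 * (omegaK d * omegaK d)"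
    unfolding xy by (simp add: algebra_simps)
  also have "\<dots> = of_int (s1 * s2 - t1 * t2 * omegaK_norm d)
      + of_int (s1 * t2 + t1 * s2 + t1 * t2 * d) * omegaK d"
    by (simp add: omegaK_mult_self algebra_simps)
  finally show "\<exists>s t. x * y = of_int s + of_int t * omegaK d" by blast
qed

lemma OK_cnj: "x \<in> OK d \<Longrightarrow> cnj x \<in> OK d"
  unfolding OK_iff
proof (elim exE)
  fix s t assume "x = of_int s + of_int t * omegaK d"
  then have "cnj x = of_int (s + t * d) + of_int (- t) * omegaK d" by (simp add: cnj_omegaK algebra_simps)
  then show "\<exists>s t. cnj x = of_int s + of_int t * omegaK d" by blast
qed

lemma OK_sum: "(\<And>i. i < (n::nat) \<Longrightarrow> f i \<in> OK d) \<Longrightarrow> (\<Sum>i<n. f i) \<in> OK d"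
  by (induction n) (auto intro: OK_add)

lemma OK_real_imp_Ints:
  assumes "z \<in> OK d" and "Im z = 0"
  shows "z \<in> \<int>"
proof -
  obtain s t where z: "z = of_int s + of_int t * omegaK d" using assms(1) unfolding OK_iff by blast
  have "Im (omegaK d) \<noteq> 0" using d_neg by (simp add: omegaK_def)
  then have "t = 0" using assms(2) by (simp add: z)
  then show ?thesis by (simp add: z)
qed

lemma OK_norm_Ints: "z \<in> OK d \<Longrightarrow> z * cnj z \<in> \<int>"
  by (intro OK_real_imp_Ints OK_mult OK_cnj) simp_all


lemma OK_eq_omegaQ_comb:
  assumes "b\<^sup>2 - 4 * a * c = d" and "a \<noteq> 0" and "\<alpha> \<in> OK d"
  obtains u v :: int where "\<alpha> = of_int u * omegaQ d a b + of_int v"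
proof -
  obtain s t where st: "\<alpha> = of_int s + of_int t * omegaK d" using assms(3) unfolding OK_iff by blast
  have "even (b + d)"
    using assms(1) by (simp add: power2_eq_square flip: assms(1))
  then obtain k where k: "b + d = 2 * k" by (elim evenE)
  have bk: "(of_int b :: complex) = 2 * of_int k - of_int d"
    using arg_cong[OF k, of "of_int :: int \<Rightarrow> complex"] by (simp add: eq_diff_eq)
  have omegaK: "omegaK d = of_int a * omegaQ d a b + of_int k"
    using assms(2) unfolding omegaQ_def omegaK_def bk by (simp add: field_simps)
  have "\<alpha> = of_int (a * t) * omegaQ d a b + of_int (s + t * k)"
    unfolding st omegaK by (simp add: algebra_simps)
  then show ?thesis by (rule that)
qed

lemma prin_mem: "y \<in> OK d \<Longrightarrow> x * y \<in> prin d x"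
  unfolding prin_def by blast

lemma prin_self: "x \<in> prin d x"
  using prin_mem[of 1 x] by simp

lemma prin_one: "prin d 1 = OK d"
  unfolding prin_def by auto

lemma prin_subset_OK: "x \<in> OK d \<Longrightarrow> prin d x \<subseteq> OK d"
  using OK_mult by (auto simp: prin_def)

lemma prin_add: "y \<in> prin d x \<Longrightarrow> z \<in> prin d x \<Longrightarrow> y + z \<in> prin d x"
  unfolding prin_def by (auto simp flip: distrib_left intro: OK_add)

lemma prin_diff: "y \<in> prin d x \<Longrightarrow> z \<in> prin d x \<Longrightarrow> y - z \<in> prin d x"
  unfolding prin_def by (auto simp flip: right_diff_distrib intro: OK_diff)

lemma prin_mult_left: "r \<in> OK d \<Longrightarrow> y \<in> prin d x \<Longrightarrow> r * y \<in> prin d x"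
  unfolding prin_def by (auto simp: mult.left_commute intro: OK_mult)

lemma fid_prod_mem: "x \<in> I \<Longrightarrow> y \<in> J \<Longrightarrow> x * y \<in> fid_prod I J"
  unfolding fid_prod_def
  by (rule CollectI, intro exI[of _ "1::nat"] exI[of _ "\<lambda>_. x"] exI[of _ "\<lambda>_. y"]) simp

lemma fid_prod_prin_subset:
  assumes "z \<in> fid_prod (prin d x) J" and "J \<subseteq> prin d y"
  shows "\<exists>r\<in>OK d. z = x * y * r"
proof -
  obtain n :: nat and X Y where z: "z = (\<Sum>i<n. X i * Y i)" and XY: "\<forall>i<n. X i \<in> prin d x \<and> Y i \<in> J"
    using assms(1) unfolding fid_prod_def by blast
  have "\<forall>i<n. \<exists>r\<in>OK d. X i * Y i = x * y * r"
    using XY assms(2) by (fastforce simp: prin_def intro: OK_mult)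
  then obtain r where r: "\<And>i. i < n \<Longrightarrow> r i \<in> OK d \<and> X i * Y i = x * y * r i"
    by metis
  then have "z = x * y * (\<Sum>i<n. r i)"
    by (simp add: z sum_distrib_left)
  with r show ?thesis by (blast intro: OK_sum)
qed

lemma fid_prod_prin: "fid_prod (prin d x) (prin d y) = prin d (x * y)"
proof
  show "fid_prod (prin d x) (prin d y) \<subseteq> prin d (x * y)"
    using fid_prod_prin_subset[of _ x "prin d y" y] prin_mem by blast
  show "prin d (x * y) \<subseteq> fid_prod (prin d x) (prin d y)"
    using fid_prod_mem[OF prin_self prin_mem] by (auto simp: prin_def mult.assoc)
qed

lemma one_mod_mult:
  assumes "x \<in> OK d" "x - 1 \<in> prin d n" "y - 1 \<in> prin d n"
  shows "x * y - 1 \<in> prin d n"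
proof -
  have "x * y - 1 = x * (y - 1) + (x - 1)" by (simp add: algebra_simps)
  then show ?thesis
    using prin_add[OF prin_mult_left[OF assms(1,3)] assms(2)] by (simp only:)
qed

lemma int_coprime_prin:
  assumes "\<alpha> \<in> OK d" "\<alpha> \<noteq> 0" "\<alpha> - 1 \<in> prin d (of_int N)"
  shows "int_coprime d N (prin d \<alpha>)"
proof -
  have sub: "prin d \<alpha> \<subseteq> OK d" using prin_subset_OK assms(1) by blast
  have "frac_ideal d (prin d \<alpha>)"
    unfolding frac_ideal_def
  proof (intro conjI)
    show "prin d \<alpha> \<subseteq> Kf d" using sub by (auto simp: OK_def)
    show "0 \<in> prin d \<alpha>" using prin_mem[OF OK_0] by simp
    show "prin d \<alpha> \<noteq> {0}" using prin_self[of \<alpha>] assms(2) by blast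
    show "\<forall>x\<in>prin d \<alpha>. \<forall>y\<in>prin d \<alpha>. x + y \<in> prin d \<alpha>"
      using prin_add by blast
    show "\<forall>r\<in>OK d. \<forall>x\<in>prin d \<alpha>. r * x \<in> prin d \<alpha>"
      using prin_mult_left by blast
    show "\<exists>c\<in>OK d. c \<noteq> 0 \<and> (\<forall>x\<in>prin d \<alpha>. c * x \<in> OK d)"
      using sub by (intro bexI[of _ 1]) auto
  qed
  moreover have "fid_sum (prin d \<alpha>) (prin d (of_int N)) = OK d"
  proof
    show "fid_sum (prin d \<alpha>) (prin d (of_int N)) \<subseteq> OK d"
      using sub prin_subset_OK[OF OK_of_int] OK_add unfolding fid_sum_def by blast
    show "OK d \<subseteq> fid_sum (prin d \<alpha>) (prin d (of_int N))"
    proof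
      fix z assume z: "z \<in> OK d"
      have "z = \<alpha> * z + - ((\<alpha> - 1) * z)" by (simp add: algebra_simps)
      moreover have "\<alpha> * z \<in> prin d \<alpha>" "- ((\<alpha> - 1) * z) \<in> prin d (of_int N)"
        using prin_mem[OF z] prin_mult_left[OF OK_uminus[OF z] assms(3)] by (simp_all add: mult.commute)
      ultimately show "z \<in> fid_sum (prin d \<alpha>) (prin d (of_int N))"
        unfolding fid_sum_def by blast
    qed
  qed
  ultimately show ?thesis unfolding int_coprime_def using sub by blast
qed

lemma prin_divide_in_PK1:
  assumes "\<alpha> \<in> OK d" "\<alpha> \<noteq> 0" "\<alpha> - 1 \<in> prin d (of_int N)"
    and "\<beta> \<in> OK d" "\<beta> \<noteq> 0" "\<beta> - 1 \<in> prin d (of_int N)"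
  shows "prin d (\<alpha> / \<beta>) \<in> PK1 d N"
proof -
  have "\<alpha> - \<beta> \<in> prin d (of_int N)"
    using prin_diff[OF assms(3,6)] by simp
  then have "mult_cong1 d N (\<alpha> / \<beta>)"
    unfolding mult_cong1_def using assms int_coprime_prin by blast
  moreover have "\<alpha> / \<beta> \<in> Kf d" using Kf_divide[OF d_neg] assms(1,4) by (simp add: OK_def)
  ultimately show ?thesis unfolding PK1_def using assms(2,5) by auto
qed

lemma int_coprime_obtain_one_mod:
  assumes "int_coprime d N A" and "N \<noteq> 0"
  obtains \<beta> where "\<beta> \<in> A" "\<beta> \<noteq> 0" "\<beta> - 1 \<in> prin d (of_int N)"
proof -
  have ideal: "frac_ideal d A" and "A \<subseteq> OK d" and "1 \<in> fid_sum A (prin d (of_int N))"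
    using assms(1) unfolding int_coprime_def by auto
  then obtain \<beta> \<rho> where "\<beta> \<in> A" "\<rho> \<in> OK d" "1 = \<beta> + of_int N * \<rho>"
    unfolding fid_sum_def prin_def by blast
  then have \<beta>: "\<beta> \<in> A" "\<rho> \<in> OK d" "\<beta> = 1 - of_int N * \<rho>" by (simp_all add: eq_diff_eq)
  obtain \<gamma> where \<gamma>: "\<gamma> \<in> A" "\<gamma> \<noteq> 0" using ideal unfolding frac_ideal_def by blast
  \<comment> \<open>\<open>\<beta>\<close> may vanish, but then \<open>\<beta> + N\<gamma>\<close> does not\<close>
  have "\<beta> + of_int N * \<gamma> \<in> A" using ideal \<beta>(1) \<gamma>(1) unfolding frac_ideal_def by auto
  moreover have "\<beta> - 1 \<in> prin d (of_int N)"
    using prin_mem[OF OK_uminus[OF \<beta>(2)], of "of_int N"] \<beta>(3) by simp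
  moreover have "(\<beta> + of_int N * \<gamma>) - 1 = of_int N * (\<gamma> - \<rho>)"
    using \<beta>(3) by (simp add: algebra_simps)
  then have "(\<beta> + of_int N * \<gamma>) - 1 \<in> prin d (of_int N)"
    using \<beta>(2) \<gamma>(1) \<open>A \<subseteq> OK d\<close> by (auto intro: prin_mem OK_diff)
  ultimately show ?thesis
    using that \<beta>(1) \<gamma>(2) assms(2) by (cases "\<beta> = 0") auto
qed

text \<open>If \<open>\<alpha>\<beta> = 1 + N z\<close>, then \<open>N(\<alpha>) N(\<beta>) = 1 + N (z + z\<^sup>* + N z z\<^sup>* )\<close>, and the
  last factor is a real element of \<open>\<O>\<^sub>K\<close>, hence a rational integer.\<close>
lemma coprime_norm_if_invertible_mod:
  assumes "\<alpha> \<in> OK d" "\<beta> \<in> OK d" "\<alpha> * \<beta> - 1 \<in> prin d (of_int N)"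
    and "\<alpha> * cnj \<alpha> = of_int n"
  shows "coprime N n"
proof -
  obtain z where "z \<in> OK d" "\<alpha> * \<beta> - 1 = of_int N * z"
    using assms(3) unfolding prin_def by blast
  then have z: "z \<in> OK d" "\<alpha> * \<beta> = 1 + of_int N * z" by (simp_all add: algebra_simps)
  obtain n' where n': "\<beta> * cnj \<beta> = of_int n'"
    using OK_norm_Ints[OF assms(2)] by (auto elim: Ints_cases)
  define W where "W = z + cnj z + of_int N * (z * cnj z)"
  have "W \<in> \<int>"
    unfolding W_def using z(1) by (intro OK_real_imp_Ints OK_add OK_mult OK_cnj) simp_all
  then obtain j where j: "W = of_int j" by (elim Ints_cases)
  have "of_int (n * n') = (\<alpha> * cnj \<alpha>) * (\<beta> * cnj \<beta>)"
    by (simp add: assms(4) n')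
  also have "\<dots> = (\<alpha> * \<beta>) * cnj (\<alpha> * \<beta>)"
    by (simp add: mult_ac)
  also have "\<dots> = 1 + of_int N * W"
    unfolding z(2) W_def by (simp add: algebra_simps)
  finally have "n * n' - N * j = 1"
    unfolding j by (metis add_diff_cancel_right' of_int_eq_iff of_int_add of_int_mult of_int_1 add.commute)
  show ?thesis
  proof (rule coprimeI)
    fix g assume "g dvd N" "g dvd n"
    then have "g dvd n * n' - N * j" by simp
    then show "is_unit g" using \<open>n * n' - N * j = 1\<close> by simp
  qed
qed

lemma PK_class_meets_invertible_mod:
  assumes "C \<in> PK d N" and "N \<noteq> 0"
  obtains \<alpha> \<beta> J where "\<alpha> \<in> OK d" "\<alpha> \<noteq> 0" "\<beta> \<in> OK d" "\<alpha> * \<beta> - 1 \<in> prin d (of_int N)"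
    and "J \<in> PK1 d N" "prin d \<alpha> = fid_prod C J"
proof -
  obtain x A B where C: "C = prin d x" and x: "x \<noteq> 0"
    and A: "int_coprime d N A" and B: "int_coprime d N B" and AB: "fid_prod (prin d x) B = A"
    using assms(1) unfolding PK_def IK_def by blast
  obtain \<beta>0 where \<beta>0: "\<beta>0 \<in> B" "\<beta>0 \<noteq> 0" "\<beta>0 - 1 \<in> prin d (of_int N)"
    using int_coprime_obtain_one_mod[OF B assms(2)] .
  obtain a0 where a0: "a0 \<in> A" "a0 \<noteq> 0" "a0 - 1 \<in> prin d (of_int N)"
    using int_coprime_obtain_one_mod[OF A assms(2)] .
  have "A \<subseteq> OK d" "B \<subseteq> OK d"
    using A B unfolding int_coprime_def by blast+
  then obtain b0 where b0: "b0 \<in> OK d" "a0 = x * b0"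
    using fid_prod_prin_subset[of a0 x B 1] a0(1) AB by (auto simp: prin_one)
  define \<alpha> where "\<alpha> = x * \<beta>0"
  have \<alpha>: "\<alpha> \<in> OK d" "\<alpha> \<noteq> 0"
    using fid_prod_mem[OF prin_self \<beta>0(1)] AB \<open>A \<subseteq> OK d\<close> \<beta>0(2) x by (auto simp: \<alpha>_def)
  have "\<alpha> * b0 = \<beta>0 * a0" by (simp add: \<alpha>_def b0(2))
  then have \<alpha>b0: "\<alpha> * b0 - 1 \<in> prin d (of_int N)"
    using one_mod_mult[OF _ \<beta>0(3) a0(3)] \<beta>0(1) \<open>B \<subseteq> OK d\<close> by auto
  \<comment> \<open>\<open>\<alpha> / x = \<alpha> b\<^sub>0 / a\<^sub>0\<close> is a quotient of elements \<open>\<equiv> 1 (mod N)\<close>\<close>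
  have "prin d (\<alpha> * b0 / a0) \<in> PK1 d N"
    using \<alpha> b0 a0 \<alpha>b0 \<open>A \<subseteq> OK d\<close> by (intro prin_divide_in_PK1 OK_mult) auto
  moreover have "\<alpha> * b0 / a0 = \<alpha> / x"
    using x a0(2) b0(2) by simp
  ultimately have "prin d (\<alpha> / x) \<in> PK1 d N" by simp
  moreover have "prin d \<alpha> = fid_prod C (prin d (\<alpha> / x))"
    using x by (simp add: C fid_prod_prin)
  ultimately show ?thesis using that[OF \<alpha> b0(1) \<alpha>b0] by blast
qed

end

theorem lemma2p2:
  fixes d N a b c :: int and P :: "complex set set"
  assumes "d < 0" and "fund_disc d" and "N > 0"
    and "QN d N a b c"
    and "subgroup_IK d N P" and "PK1 d N \<subseteq> P" and "P \<subseteq> PK d N"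
  shows "\<forall>C \<in> PK d N. \<exists>u v :: int. (u, v) \<noteq> (0, 0) \<and> gcd N (qf a b c v (- u)) = 1 \<and>
           (\<exists>J \<in> P. prin d (of_int u * omegaQ d a b + of_int v) = fid_prod C J)"
proof
  interpret imag_quadratic_field d using assms(1,2) by unfold_locales
  have disc: "b\<^sup>2 - 4 * a * c = d" and "a \<noteq> 0" and "coprime N a"
    using assms(4) unfolding QN_def by (simp_all add: coprime_iff_gcd_eq_1)
  have "N \<noteq> 0" using assms(3) by simp
  fix C assume "C \<in> PK d N"
  obtain \<alpha> \<beta> J where \<alpha>: "\<alpha> \<in> OK d" "\<alpha> \<noteq> 0" "\<beta> \<in> OK d" "\<alpha> * \<beta> - 1 \<in> prin d (of_int N)"
    and J: "J \<in> PK1 d N" "prin d \<alpha> = fid_prod C J"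
    by (rule PK_class_meets_invertible_mod[OF \<open>C \<in> PK d N\<close> \<open>N \<noteq> 0\<close>])
  obtain u v where uv: "\<alpha> = of_int u * omegaQ d a b + of_int v"
    using OK_eq_omegaQ_comb[OF disc \<open>a \<noteq> 0\<close> \<alpha>(1)] .
  obtain n where n: "\<alpha> * cnj \<alpha> = of_int n"
    using OK_norm_Ints[OF \<alpha>(1)] by (auto elim: Ints_cases)
  have "(of_int (qf a b c v (- u)) :: complex) = of_int (a * n)"
    using qf_eq_norm_omegaQ[OF assms(1) disc \<open>a \<noteq> 0\<close>, where u = u and v = v]
    unfolding uv[symmetric] n by simp
  then have "qf a b c v (- u) = a * n" by (simp only: of_int_eq_iff)
  moreover have "coprime N (a * n)"
    using coprime_norm_if_invertible_mod[OF \<alpha>(1,3,4) n] \<open>coprime N a\<close> by simp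
  ultimately have "gcd N (qf a b c v (- u)) = 1" by simp
  show "\<exists>u v :: int. (u, v) \<noteq> (0, 0) \<and> gcd N (qf a b c v (- u)) = 1 \<and>
           (\<exists>J \<in> P. prin d (of_int u * omegaQ d a b + of_int v) = fid_prod C J)"
  proof (intro exI conjI)
    show "(u, v) \<noteq> (0, 0)" using uv \<alpha>(2) by auto
    show "gcd N (qf a b c v (- u)) = 1" by fact
    show "\<exists>J \<in> P. prin d (of_int u * omegaQ d a b + of_int v) = fid_prod C J"
      using J assms(6) uv by blast
  qed
qed

end
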